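(* Let $(L,\le,(\sqsubseteq_\alpha)_{\alpha<\kappa})$ be a model of Axioms 1–4. Let $\alpha<\kappa$ and let $(x_\beta)_{\beta<\alpha}$ be a partial compatible sequence. Let $x=\bigvee_{\beta<\alpha}x_\beta$. Then: - $x$ is the $\le$-least element of $(x]_\alpha$; - $x\sqsubseteq_\alpha z$ for all $z\in(x]_\alpha$; - the sequence $(y_\delta)_{\delta<\kappa}$, defined by $y_\beta=x_\beta$ for $\beta<\alpha$ and $y_\delta=x$ for $\alpha\le\delta<\kappa$, is a compatible sequence.
   Context: Setting (model of Axioms 1–4). Let $(L,\le)$ be a complete lattice with join operation $\bigvee$ and least element $\perp$. Let $\kappa>0$ be an ordinal, and for each ordinal $\alpha<\kappa$ let $\sqsubseteq_\alpha$ be a preorder on $L$. Derived relation: $x=_\alpha y$ means $x\sqsubseteq_\alpha y$ and $y\sqsubseteq_\alpha x$. Derived sets, for $x\in L$ and $\alpha<\kappa$: - $(x]_\alpha=\{y\in L:\forall\beta<\alpha,\ x=_\beta y\}$. - $[x]_\alpha=\{y\in L: x=_\alpha y\}$. For a set $X$, $X\sqsubseteq_\alpha y$ means $x\sqsubseteq_\alpha y$ for all $x\in X$. The structure is a model of Axioms 1–4 if: - (A1) for all $\alpha<\beta<\kappa$, $x\sqsubseteq_\beta y$ implies $x=_\alpha y$; - (A2) $\bigcap_{\alpha<\kappa}=_\alpha$ is the identity relation on $L$; - (A3) for every $x\in L$, every $\alpha<\kappa$ and every $X\subseteq(x]_\alpha$ there is $y\in(x]_\alpha$ with $X\sqsubseteq_\alpha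 y$ such that for all $z\in(x]_\alpha$ with $X\sqsubseteq_\alpha z$ we have $y\sqsubseteq_\alpha z$ and $y\le z$; - (A4) for every nonempty $X\subseteq L$, every $\alpha<\kappa$ and every $y\in L$, if $y=_\alpha x$ for all $x\in X$ then $y=_\alpha\bigvee X$. A sequence $(x_\alpha)_{\alpha<\kappa}$ in $L$ is compatible if each $x_\alpha$ is the $\le$-least element of $[x_\alpha]_\alpha$ and $x_\alpha=_\alpha x_\beta$ for all $\alpha<\beta<\kappa$. For an ordinal $\alpha\le\kappa$, a sequence $(x_\beta)_{\beta<\alpha}$ is a partial compatible sequence if each $x_\beta$ is the $\le$-least element of $[x_\beta]_\beta$ and $x_\beta=_\beta x_\gamma$ for all $\beta<\gamma<\alpha$. *)

theory Defs
  imports Main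
begin

text \<open>Ordinals below kappa are modelled by a type 'i of class wellorder
  (kappa = order type of 'i; kappa > 0 since types are nonempty).
  The family of preorders is  R :: 'i => 'a => 'a => bool,  R \<alpha> x y meaning x \<sqsubseteq>_\<alpha> y.\<close>

definition eqa :: "('i \<Rightarrow> 'a \<Rightarrow> 'a \<Rightarrow> bool) \<Rightarrow> 'i \<Rightarrow> 'a \<Rightarrow> 'a \<Rightarrow> bool" where
  "eqa R \<alpha> x y \<longleftrightarrow> R \<alpha> x y \<and> R \<alpha> y x"

definition down_set :: "('i::wellorder \<Rightarrow> 'a \<Rightarrow> 'a \<Rightarrow> bool) \<Rightarrow> 'a \<Rightarrow> 'i \<Rightarrow> 'a set" where
  "down_set R x \<alpha> = {y. \<forall>\<beta><\<alpha>. eqa R \<beta> x y}"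

definition cls_set :: "('i \<Rightarrow> 'a \<Rightarrow> 'a \<Rightarrow> bool) \<Rightarrow> 'a \<Rightarrow> 'i \<Rightarrow> 'a set" where
  "cls_set R x \<alpha> = {y. eqa R \<alpha> x y}"

definition is_least_in :: "'a::order set \<Rightarrow> 'a \<Rightarrow> bool" where
  "is_least_in S x \<longleftrightarrow> x \<in> S \<and> (\<forall>z\<in>S. x \<le> z)"

definition model_axioms :: "('i::wellorder \<Rightarrow> 'a::complete_lattice \<Rightarrow> 'a \<Rightarrow> bool) \<Rightarrow> bool" where
  "model_axioms R \<longleftrightarrow>
     (\<forall>\<alpha>. reflp (R \<alpha>) \<and> transp (R \<alpha>)) \<and>
     (\<forall>\<alpha> \<beta> x y. \<alpha> < \<beta> \<longrightarrow> R \<beta> x y \<longrightarrow> eqa R \<alpha> x y) \<and>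
     (\<forall>x y. (\<forall>\<alpha>. eqa R \<alpha> x y) \<longrightarrow> x = y) \<and>
     (\<forall>x \<alpha> X. X \<subseteq> down_set R x \<alpha> \<longrightarrow>
        (\<exists>y\<in>down_set R x \<alpha>. (\<forall>u\<in>X. R \<alpha> u y) \<and>
           (\<forall>z\<in>down_set R x \<alpha>. (\<forall>u\<in>X. R \<alpha> u z) \<longrightarrow> R \<alpha> y z \<and> y \<le> z))) \<and>
     (\<forall>X \<alpha> y. X \<noteq> {} \<longrightarrow> (\<forall>x\<in>X. eqa R \<alpha> y x) \<longrightarrow> eqa R \<alpha> y (Sup X))"

definition compatible_seq :: "('i::wellorder \<Rightarrow> 'a::complete_lattice \<Rightarrow> 'a \<Rightarrow> bool) \<Rightarrow> ('i \<Rightarrow> 'a) \<Rightarrow> bool" where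
  "compatible_seq R xs \<longleftrightarrow>
     (\<forall>\<alpha>. is_least_in (cls_set R (xs \<alpha>) \<alpha>) (xs \<alpha>)) \<and>
     (\<forall>\<alpha> \<beta>. \<alpha> < \<beta> \<longrightarrow> eqa R \<alpha> (xs \<alpha>) (xs \<beta>))"

text \<open>Partial compatible sequence indexed by \<beta> < \<alpha> (values at \<beta> \<ge> \<alpha> are irrelevant).\<close>
definition partial_compatible_seq :: "('i::wellorder \<Rightarrow> 'a::complete_lattice \<Rightarrow> 'a \<Rightarrow> bool) \<Rightarrow> 'i \<Rightarrow> ('i \<Rightarrow> 'a) \<Rightarrow> bool" where
  "partial_compatible_seq R \<alpha> xs \<longleftrightarrow>
     (\<forall>\<beta><\<alpha>. is_least_in (cls_set R (xs \<beta>) \<beta>) (xs \<beta>)) \<and>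
     (\<forall>\<beta> \<gamma>. \<beta> < \<gamma> \<longrightarrow> \<gamma> < \<alpha> \<longrightarrow> eqa R \<beta> (xs \<beta>) (xs \<gamma>))"

end

theory Submission
  imports Defs
begin

text \<open>Along a partial compatible sequence the terms increase, since \<open>x\<^sub>\<beta>\<close> is \<open>\<le>\<close>-least in its
  \<open>=\<^sub>\<beta>\<close>-class and \<open>x\<^sub>\<beta> =\<^sub>\<beta> x\<^sub>\<gamma>\<close>. Hence the join \<open>x\<close> is also the join of every tail, and
  Axiom 4 gives \<open>x\<^sub>\<beta> =\<^sub>\<beta> x\<close> for all \<open>\<beta> < \<alpha>\<close>. Consequently every \<open>z \<in> (x]\<^sub>\<alpha>\<close> is \<open>=\<^sub>\<beta>\<close>-equivalent
  to \<open>x\<^sub>\<beta>\<close>, so \<open>x\<^sub>\<beta> \<le> z\<close>, and \<open>x \<le> z\<close>. Axiom 3 with \<open>X = {}\<close> provides a least element of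
  \<open>(x]\<^sub>\<alpha>\<close> that is also \<open>\<sqsubseteq>\<^sub>\<alpha>\<close>-least; it must be \<open>x\<close>. Finally Axiom 1 puts each class
  \<open>[x]\<^sub>\<delta>\<close>, \<open>\<delta> \<ge> \<alpha>\<close>, inside \<open>(x]\<^sub>\<alpha>\<close>, which makes the extended sequence compatible.\<close>

lemma Sup_image_eq_Sup_tail:
  fixes f :: "'i::linorder \<Rightarrow> 'a::complete_lattice"
  assumes mono: "\<And>b c. b < c \<Longrightarrow> c < a \<Longrightarrow> f b \<le> f c" and "b < a"
  shows "Sup (f ` {..<a}) = Sup (f ` {b..<a})"
proof (rule antisym)
  show "Sup (f ` {..<a}) \<le> Sup (f ` {b..<a})"
  proof (rule Sup_least)
    fix u assume "u \<in> f ` {..<a}"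
    then obtain c where c: "c < a" "u = f c" by blast
    show "u \<le> Sup (f ` {b..<a})"
    proof (cases "b \<le> c")
      case True
      then show ?thesis using c by (intro Sup_upper) auto
    next
      case False
      then have "u \<le> f b" using c mono[of c b] \<open>b < a\<close> by (simp add: not_le)
      also have "f b \<le> Sup (f ` {b..<a})" using \<open>b < a\<close> by (intro Sup_upper) auto
      finally show ?thesis .
    qed
  qed
  show "Sup (f ` {b..<a}) \<le> Sup (f ` {..<a})" by (rule Sup_subset_mono) auto
qed

locale axioms_model =
  fixes R :: "'i::wellorder \<Rightarrow> 'a::complete_lattice \<Rightarrow> 'a \<Rightarrow> bool"
  assumes R_refl: "R \<alpha> x x"
    and R_trans: "R \<alpha> x y \<Longrightarrow> R \<alpha> y z \<Longrightarrow> R \<alpha> x z"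
    and R_imp_eqa_below: "\<alpha> < \<beta> \<Longrightarrow> R \<beta> x y \<Longrightarrow> eqa R \<alpha> x y"
    and least_upper_bound_in_down_set: "X \<subseteq> down_set R x \<alpha> \<Longrightarrow>
        \<exists>y\<in>down_set R x \<alpha>. (\<forall>u\<in>X. R \<alpha> u y) \<and>
           (\<forall>z\<in>down_set R x \<alpha>. (\<forall>u\<in>X. R \<alpha> u z) \<longrightarrow> R \<alpha> y z \<and> y \<le> z)"
    and eqa_Sup: "X \<noteq> {} \<Longrightarrow> (\<And>x. x \<in> X \<Longrightarrow> eqa R \<alpha> y x) \<Longrightarrow> eqa R \<alpha> y (Sup X)"

lemma model_axioms_imp_axioms_model: "model_axioms R \<Longrightarrow> axioms_model R"
  unfolding model_axioms_def by unfold_locales (simp_all add: reflp_def transp_def)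

context axioms_model
begin

lemma eqa_refl: "eqa R \<alpha> x x"
  unfolding eqa_def using R_refl by blast

lemma eqa_trans: "eqa R \<alpha> x y \<Longrightarrow> eqa R \<alpha> y z \<Longrightarrow> eqa R \<alpha> x z"
  unfolding eqa_def using R_trans by blast

lemma mem_down_set_self: "x \<in> down_set R x \<alpha>"
  unfolding down_set_def using eqa_refl by blast

lemma cls_set_subset_down_set:
  assumes "\<alpha> \<le> \<delta>"
  shows "cls_set R x \<delta> \<subseteq> down_set R x \<alpha>"
  using assms R_imp_eqa_below unfolding cls_set_def down_set_def eqa_def
  by (auto dest: order.strict_trans2)

lemma least_in_down_set_is_R_least:
  assumes "is_least_in (down_set R x \<alpha>) u" and "z \<in> down_set R x \<alpha>"
  shows "R \<alpha> u z"
proof -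
  obtain y where y: "y \<in> down_set R x \<alpha>"
    "\<And>z. z \<in> down_set R x \<alpha> \<Longrightarrow> R \<alpha> y z \<and> y \<le> z"
    using least_upper_bound_in_down_set[of "{}" x \<alpha>] by blast
  have "u = y"
    using assms(1) y unfolding is_least_in_def by (blast intro: antisym)
  then show ?thesis using y(2) assms(2) by blast
qed

context
  fixes \<alpha> :: 'i and xs :: "'i \<Rightarrow> 'a"
  assumes pcs: "partial_compatible_seq R \<alpha> xs"
begin

lemma pcs_least: "\<beta> < \<alpha> \<Longrightarrow> eqa R \<beta> (xs \<beta>) z \<Longrightarrow> xs \<beta> \<le> z"
  using pcs unfolding partial_compatible_seq_def is_least_in_def cls_set_def by blast

lemma pcs_eqa: "\<beta> < \<gamma> \<Longrightarrow> \<gamma> < \<alpha> \<Longrightarrow> eqa R \<beta> (xs \<beta>) (xs \<gamma>)"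
  using pcs unfolding partial_compatible_seq_def by blast

lemma pcs_mono: "\<beta> < \<gamma> \<Longrightarrow> \<gamma> < \<alpha> \<Longrightarrow> xs \<beta> \<le> xs \<gamma>"
  using pcs_eqa pcs_least by (meson order.strict_trans)

lemma pcs_eqa_Sup:
  assumes "\<beta> < \<alpha>"
  shows "eqa R \<beta> (xs \<beta>) (Sup (xs ` {..<\<alpha>}))"
proof -
  have "eqa R \<beta> (xs \<beta>) (Sup (xs ` {\<beta>..<\<alpha>}))"
  proof (rule eqa_Sup)
    fix u assume "u \<in> xs ` {\<beta>..<\<alpha>}"
    then obtain \<gamma> where "\<beta> \<le> \<gamma>" "\<gamma> < \<alpha>" "u = xs \<gamma>" by auto
    then show "eqa R \<beta> (xs \<beta>) u"
      using pcs_eqa eqa_refl by (cases "\<beta> = \<gamma>") auto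
  qed (use assms in auto)
  then show ?thesis
    using Sup_image_eq_Sup_tail[OF pcs_mono assms] by simp
qed

lemma Sup_le_down_set:
  assumes "z \<in> down_set R (Sup (xs ` {..<\<alpha>})) \<alpha>"
  shows "Sup (xs ` {..<\<alpha>}) \<le> z"
proof (rule Sup_least)
  fix u assume "u \<in> xs ` {..<\<alpha>}"
  then obtain \<beta> where \<beta>: "\<beta> < \<alpha>" "u = xs \<beta>" by blast
  have "eqa R \<beta> (Sup (xs ` {..<\<alpha>})) z"
    using assms \<beta>(1) unfolding down_set_def by blast
  then have "eqa R \<beta> (xs \<beta>) z"
    using pcs_eqa_Sup[OF \<beta>(1)] eqa_trans by blast
  then show "u \<le> z" using pcs_least \<beta> by blast
qed

lemma compatible_seq_extend:
  assumes least: "is_least_in (down_set R x \<alpha>) x"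
    and eqa_x: "\<And>\<beta>. \<beta> < \<alpha> \<Longrightarrow> eqa R \<beta> (xs \<beta>) x"
  shows "compatible_seq R (\<lambda>\<delta>. if \<delta> < \<alpha> then xs \<delta> else x)"
  unfolding compatible_seq_def
proof (intro conjI allI impI)
  fix \<delta>
  have "is_least_in (cls_set R x \<delta>) x" if "\<alpha> \<le> \<delta>"
    using least cls_set_subset_down_set[OF that] eqa_refl
    unfolding is_least_in_def cls_set_def by blast
  then show "is_least_in (cls_set R (if \<delta> < \<alpha> then xs \<delta> else x) \<delta>) (if \<delta> < \<alpha> then xs \<delta> else x)"
    using pcs unfolding partial_compatible_seq_def by auto
next
  fix \<beta> \<gamma> :: 'i assume "\<beta> < \<gamma>"
  then show "eqa R \<beta> (if \<beta> < \<alpha> then xs \<beta> else x) (if \<gamma> < \<alpha> then xs \<gamma> else x)"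
    using pcs_eqa eqa_x eqa_refl by auto
qed

end

end

theorem mainTheorem11:
  fixes R :: "'i::wellorder \<Rightarrow> 'a::complete_lattice \<Rightarrow> 'a \<Rightarrow> bool"
    and \<alpha> :: 'i and xs :: "'i \<Rightarrow> 'a"
  assumes "model_axioms R"
    and "partial_compatible_seq R \<alpha> xs"
  defines "x \<equiv> Sup (xs ` {\<beta>. \<beta> < \<alpha>})"
  shows "is_least_in (down_set R x \<alpha>) x
         \<and> (\<forall>z\<in>down_set R x \<alpha>. R \<alpha> x z)
         \<and> compatible_seq R (\<lambda>\<delta>. if \<delta> < \<alpha> then xs \<delta> else x)"
proof -
  interpret axioms_model R using assms(1) by (rule model_axioms_imp_axioms_model)
  have x: "x = Sup (xs ` {..<\<alpha>})" unfolding x_def lessThan_def ..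
  have least: "is_least_in (down_set R x \<alpha>) x"
    unfolding is_least_in_def x using mem_down_set_self Sup_le_down_set[OF assms(2)] by blast
  moreover have "\<forall>z\<in>down_set R x \<alpha>. R \<alpha> x z"
    using least_in_down_set_is_R_least[OF least] by blast
  moreover have "compatible_seq R (\<lambda>\<delta>. if \<delta> < \<alpha> then xs \<delta> else x)"
    using compatible_seq_extend[OF assms(2) least] pcs_eqa_Sup[OF assms(2)] x by blast
  ultimately show ?thesis by blast
qed

end
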